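(* Let $(X,d_X)$ be a geodesic metric space, let $n\ge 2$, and let $\delta,\epsilon,R>0$. Suppose $F\colon\mathbb{H}^n\to X$ satisfies: (1) for every $x\in\mathbb{R}^{n-1}$, $F\circ\eta_x\colon\mathbb{R}\to X$ is a geodesic (i.e. an isometric embedding of $\mathbb{R}$); (2) for distinct $x,x'\in\mathbb{R}^{n-1}$, the geodesics $F\circ\eta_x$ and $F\circ\eta_{x'}$ are two sides of an ideal $\delta$-slim triangle in $X$; (3) for all $x,x'\in\mathbb{R}^{n-1}$ and $t\in\mathbb{R}$, if $e^{-t}|x-x'|<\epsilon$ then $d_X(F(x,t),F(x',t))\le R$; (4) whenever $(x_k,t_k),(x_k',t_k)\in\mathbb{H}^n$ satisfy $\lim_{k\to\infty} e^{-t_k}|x_k-x_k'|=\infty$, we have $\lim_{k\to\infty} d_X(F(x_k,t_k),F(x_k',t_k))=\infty$. Then there exists $K\ge0$ such that $|d_{\mathbb{H}}(p,q) - d_X(F(p),F(q))|\le K$ for all $p,q\in\mathbb{H}^n$.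
   Context: Exponential model of hyperbolic space: $\mathbb{H}^n=\mathbb{R}^{n-1}\times\mathbb{R}$ with coordinates $(x,t)$ and metric $ds^2=e^{-2t}(dx_1^2+\dots+dx_{n-1}^2)+dt^2$; $d_{\mathbb{H}}$ is its distance. It is isometric to the upper half-space model via $(x,t)\mapsto(x,e^t)$. For $x\in\mathbb{R}^{n-1}$, the vertical geodesic is $\eta_x(t)=(x,t)$, parametrized by arc length. "$F\circ\eta_x$ and $F\circ\eta_{x'}$ are two sides of an ideal $\delta$-slim triangle" means there is a bi-infinite geodesic $\mathcal{R}_X$ in $X$ such that the three geodesics $F\circ\eta_x$, $F\circ\eta_{x'}$, $\mathcal{R}_X$ form an ideal triangle each of whose sides lies in the closed $\delta$-neighborhood of the union of the other two. *)

theory Defs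
  imports "HOL-Analysis.Analysis"
begin

text \<open>Exponential model of hyperbolic n-space: points (x,t) with x in R^(n-1)
  (here real^'n, so n - 1 = CARD('n) >= 1, i.e. n >= 2) and t real.
  Distance: pull-back of the upper half-space distance via (x,t) |-> (x, e^t).\<close>

type_synonym 'n hpt = "(real ^ 'n) \<times> real"

definition hdist :: "'n::finite hpt \<Rightarrow> 'n hpt \<Rightarrow> real" where
  "hdist p q = arcosh (1 + ((norm (fst p - fst q))\<^sup>2 + (exp (snd p) - exp (snd q))\<^sup>2)
                             / (2 * exp (snd p) * exp (snd q)))"

definition vgeod :: "real ^ 'n \<Rightarrow> real \<Rightarrow> 'n hpt" where
  "vgeod x t = (x, t)"

definition geodesic_space :: "'a::metric_space set \<Rightarrow> bool" where
  "geodesic_space S \<longleftrightarrow> (\<forall>p\<in>S. \<forall>q\<in>S. \<exists>\<gamma>::real \<Rightarrow> 'a.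
     \<gamma> 0 = p \<and> \<gamma> (dist p q) = q \<and> \<gamma> ` {0..dist p q} \<subseteq> S \<and>
     (\<forall>s\<in>{0..dist p q}. \<forall>t\<in>{0..dist p q}. dist (\<gamma> s) (\<gamma> t) = \<bar>s - t\<bar>))"

definition geodesic_line :: "(real \<Rightarrow> 'a::metric_space) \<Rightarrow> bool" where
  "geodesic_line \<gamma> \<longleftrightarrow> (\<forall>s t. dist (\<gamma> s) (\<gamma> t) = \<bar>s - t\<bar>)"

text \<open>Two geodesic rays r1, r2 (defined on [0,oo)) define the same ideal point:
  they are at finite Hausdorff distance.\<close>
definition asymptotic_rays :: "(real \<Rightarrow> 'a::metric_space) \<Rightarrow> (real \<Rightarrow> 'a) \<Rightarrow> bool" where
  "asymptotic_rays r1 r2 \<longleftrightarrow> (\<exists>C. (\<forall>t\<ge>0. \<exists>s\<ge>0. dist (r1 t) (r2 s) \<le> C) \<and>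
                                   (\<forall>s\<ge>0. \<exists>t\<ge>0. dist (r1 t) (r2 s) \<le> C))"

definition pos_ray :: "(real \<Rightarrow> 'a) \<Rightarrow> real \<Rightarrow> 'a" where "pos_ray \<gamma> t = \<gamma> t"
definition neg_ray :: "(real \<Rightarrow> 'a) \<Rightarrow> real \<Rightarrow> 'a" where "neg_ray \<gamma> t = \<gamma> (- t)"

definition ideal_slim_sides :: "real \<Rightarrow> (real \<Rightarrow> 'a::metric_space) \<Rightarrow> (real \<Rightarrow> 'a) \<Rightarrow> bool" where
  "ideal_slim_sides \<delta> g1 g2 \<longleftrightarrow> (\<exists>g3. geodesic_line g3 \<and>
     asymptotic_rays (pos_ray g1) (pos_ray g2) \<and>
     asymptotic_rays (neg_ray g1) (neg_ray g3) \<and>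
     asymptotic_rays (neg_ray g2) (pos_ray g3) \<and>
     (\<forall>t. infdist (g1 t) (range g2 \<union> range g3) \<le> \<delta>) \<and>
     (\<forall>t. infdist (g2 t) (range g1 \<union> range g3) \<le> \<delta>) \<and>
     (\<forall>t. infdist (g3 t) (range g1 \<union> range g2) \<le> \<delta>))"

end

theory Submission
  imports Defs
begin

text \<open>Along each vertical geodesic \<open>F\<close> is an isometry, and up to \<open>ln 3\<close> the hyperbolic distance
  between \<open>(x, t)\<close> and \<open>(x', t')\<close> is \<open>2 max (ln |x - x'|, t, t') - t - t'\<close>, so it suffices to show
  that \<open>dist (F (x, t)) (F (x', t'))\<close> has the same coarse form.
  By (3) the images of the vertical geodesics over \<open>x\<close> and \<open>x'\<close> are \<open>R\<close>-close above height
  \<open>ln |x - x'| + c\<close>; going up and across gives the upper bound. By (4), made uniform, they are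
  far apart below \<open>ln |x - x'| - L\<close>. There slimness forces both lines to fellow-travel the third
  side \<open>g\<close>; the parameters of their nearby points on \<open>g\<close> depend quasi-isometrically on the height
  and must run off in opposite directions, since otherwise the two lines would stay close far
  down.\<close>

section \<open>Hyperbolic distance in the exponential model\<close>

lemma arcosh_ln_bounds:
  fixes z :: real
  assumes "1 \<le> z"
  shows "ln z \<le> arcosh z" "arcosh z \<le> ln z + ln 2"
proof -
  have root: "0 \<le> sqrt (z\<^sup>2 - 1)" "sqrt (z\<^sup>2 - 1) \<le> z"
    using assms real_sqrt_le_mono[of "z\<^sup>2 - 1" "z\<^sup>2"] by auto
  show "ln z \<le> arcosh z"
    using assms root by (auto simp: arcosh_real_def intro!: ln_mono)
  have "arcosh z \<le> ln (2 * z)"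
    unfolding arcosh_real_def[OF assms] by (intro ln_mono) (use assms root in linarith)+
  then show "arcosh z \<le> ln z + ln 2"
    using assms by (simp add: ln_mult)
qed

lemma exp_double: "exp (2 * a) = (exp a)\<^sup>2" for a :: real
  by (simp add: power2_eq_square exp_add[symmetric])

lemma hdist_approx:
  fixes x x' :: "real ^ 'n::finite" and t t' s :: real
  defines "N \<equiv> (norm (x - x'))\<^sup>2 + exp (2 * t) + exp (2 * t')"
  assumes "exp (2 * s) \<le> N" "N \<le> 3 * exp (2 * s)"
  shows "\<bar>hdist (x, t) (x', t') - (2 * s - t - t')\<bar> \<le> ln 3"
proof -
  have "1 + ((norm (x - x'))\<^sup>2 + (exp t - exp t')\<^sup>2) / (2 * exp t * exp t') = N / (2 * exp t * exp t')"
    unfolding N_def exp_double by (simp add: field_simps power2_eq_square)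
  moreover have "1 \<le> 1 + ((norm (x - x'))\<^sup>2 + (exp t - exp t')\<^sup>2) / (2 * exp t * exp t')"
    by simp
  ultimately have hd: "hdist (x, t) (x', t') = arcosh (N / (2 * exp t * exp t'))"
    and ge1: "1 \<le> N / (2 * exp t * exp t')"
    by (simp_all add: hdist_def)
  have N_pos: "0 < N"
    using assms(2) exp_gt_zero[of "2 * s"] by linarith
  have "ln (N / (2 * exp t * exp t')) = ln N - ln 2 - t - t'"
    using N_pos by (simp add: ln_div ln_mult)
  moreover have "2 * s \<le> ln N" "ln N \<le> ln 3 + 2 * s"
  proof -
    have "exp (2 * s) \<le> exp (ln N)" "exp (ln N) \<le> exp (ln 3 + 2 * s)"
      using assms(2,3) N_pos by (simp_all add: exp_add)
    then show "2 * s \<le> ln N" "ln N \<le> ln 3 + 2 * s"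
      by (simp_all only: exp_le_cancel_iff)
  qed
  moreover have "ln 2 \<le> ln (3::real)"
    by simp
  ultimately show ?thesis
    using arcosh_ln_bounds[OF ge1] hd by linarith
qed

lemma hdist_same_vertical:
  fixes x :: "real ^ 'n::finite"
  shows "\<bar>hdist (x, t) (x, t') - \<bar>t - t'\<bar>\<bar> \<le> ln 3"
proof -
  have "\<bar>hdist (x, t) (x, t') - (2 * max t t' - t - t')\<bar> \<le> ln 3"
  proof (rule hdist_approx)
    show "exp (2 * max t t') \<le> (norm (x - x))\<^sup>2 + exp (2 * t) + exp (2 * t')"
      by (simp add: max_def add_increasing add_increasing2)
    have "exp (2 * t) \<le> exp (2 * max t t')" "exp (2 * t') \<le> exp (2 * max t t')"
      by auto
    then have "exp (2 * t) + exp (2 * t') \<le> 3 * exp (2 * max t t')"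
      using exp_gt_zero[of "2 * max t t'"] by linarith
    then show "(norm (x - x))\<^sup>2 + exp (2 * t) + exp (2 * t') \<le> 3 * exp (2 * max t t')"
      by simp
  qed
  moreover have "2 * max t t' - t - t' = \<bar>t - t'\<bar>"
    by (simp add: max_def)
  ultimately show ?thesis
    by simp
qed

lemma hdist_distinct_vertical:
  fixes x x' :: "real ^ 'n::finite"
  assumes "x \<noteq> x'"
  shows "\<bar>hdist (x, t) (x', t') - (2 * max (ln (norm (x - x'))) (max t t') - t - t')\<bar> \<le> ln 3"
proof (rule hdist_approx)
  define l where "l = ln (norm (x - x'))"
  have sq: "(norm (x - x'))\<^sup>2 = exp (2 * l)"
    using assms by (simp add: l_def exp_double)
  have "exp (2 * max l (max t t')) = exp (2 * l) \<or> exp (2 * max l (max t t')) = exp (2 * t) \<or>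
      exp (2 * max l (max t t')) = exp (2 * t')"
    by (simp add: max_def)
  then show "exp (2 * max (ln (norm (x - x'))) (max t t')) \<le> (norm (x - x'))\<^sup>2 + exp (2 * t) + exp (2 * t')"
    unfolding sq l_def[symmetric] using exp_gt_zero[of "2 * l"] exp_gt_zero[of "2 * t"] exp_gt_zero[of "2 * t'"]
    by (elim disjE) linarith+
  have "exp (2 * l) \<le> exp (2 * max l (max t t'))" "exp (2 * t) \<le> exp (2 * max l (max t t'))"
    "exp (2 * t') \<le> exp (2 * max l (max t t'))"
    by simp_all
  then show "(norm (x - x'))\<^sup>2 + exp (2 * t) + exp (2 * t') \<le> 3 * exp (2 * max (ln (norm (x - x'))) (max t t'))"
    unfolding sq l_def[symmetric] by linarith
qed

lemma infdist_lessE: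
  fixes x :: "'a::metric_space"
  assumes "A \<noteq> {}" "infdist x A < e"
  obtains a where "a \<in> A" "dist x a < e"
proof -
  have "(INF a\<in>A. dist x a) < e"
    using assms by (simp add: infdist_notempty)
  moreover have "bdd_below ((\<lambda>a. dist x a) ` A)"
    by (rule bdd_belowI[of _ 0]) auto
  ultimately show ?thesis
    using assms(1) that by (auto simp: cINF_less_iff)
qed

lemma dist_triangle3:
  fixes a b c d :: "'a::metric_space"
  shows "dist a d \<le> dist a b + dist b c + dist c d"
  using dist_triangle[of a d b] dist_triangle[of b d c] by linarith

lemma abs_dist_diff_le_sum:
  fixes a b c d :: "'a::metric_space"
  shows "\<bar>dist a b - dist c d\<bar> \<le> dist a c + dist b d"
proof -
  have "dist a b \<le> dist a c + dist c d + dist d b" "dist c d \<le> dist c a + dist a b + dist b d"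
    by (rule dist_triangle3)+
  then show ?thesis
    using dist_commute[of a c] dist_commute[of b d] unfolding abs_le_iff by linarith
qed

lemma ideal_slim_sidesE:
  fixes g1 g2 :: "real \<Rightarrow> 'a::metric_space"
  assumes "ideal_slim_sides \<delta> g1 g2"
  obtains g3 where "geodesic_line g3"
    "\<And>t. infdist (g1 t) (range g2 \<union> range g3) \<le> \<delta>"
    "\<And>t. infdist (g2 t) (range g1 \<union> range g3) \<le> \<delta>"
  using assms unfolding ideal_slim_sides_def by (elim exE conjE) (rule that; blast)

text \<open>The sign is read off at the probe point \<open>a - (2 c + 1)\<close>, far enough from \<open>a\<close>
  that the additive error \<open>c\<close> cannot hide it.\<close>
lemma quasi_isometry_halfline_affine:
  fixes \<phi> :: "real \<Rightarrow> real"
  assumes "0 \<le> c"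
    and qi: "\<And>u v. u \<le> a \<Longrightarrow> v \<le> a \<Longrightarrow> \<bar>\<bar>\<phi> u - \<phi> v\<bar> - \<bar>u - v\<bar>\<bar> \<le> c"
  obtains s where "s = 1 \<or> s = -1" "\<And>u. u \<le> a \<Longrightarrow> \<bar>\<phi> u - \<phi> a - s * (a - u)\<bar> \<le> 4 * c"
proof -
  define b where "b = a - (2 * c + 1)"
  define s :: real where "s = (if \<phi> a \<le> \<phi> b then 1 else -1)"
  have b: "b \<le> a"
    using \<open>0 \<le> c\<close> by (simp add: b_def)
  have "\<bar>\<phi> u - \<phi> a - s * (a - u)\<bar> \<le> 4 * c" if u: "u \<le> a" for u
  proof -
    note bounds = qi[OF u order.refl] qi[OF u b] qi[OF b order.refl]
    show ?thesis
    proof (cases "\<phi> a \<le> \<phi> b")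
      case True
      have "\<bar>\<phi> u - \<phi> a - (a - u)\<bar> \<le> 4 * c"
        using True bounds u \<open>0 \<le> c\<close> unfolding b_def by (smt (verit))
      then show ?thesis
        using True by (simp add: s_def)
    next
      case False
      have "\<bar>\<phi> u - \<phi> a - (u - a)\<bar> \<le> 4 * c"
        using False bounds u \<open>0 \<le> c\<close> unfolding b_def by (smt (verit))
      then show ?thesis
        using False by (simp add: s_def)
    qed
  qed
  moreover have "s = 1 \<or> s = -1"
    by (simp add: s_def)
  ultimately show thesis
    using that by blast
qed

section \<open>Uniform versions of conditions (3) and (4)\<close>

lemma exp_neg_mult_eq:
  fixes r u :: real
  assumes "0 < r"
  shows "exp (- u) * r = exp (ln r - u)"
  using assms by (simp add: exp_diff exp_minus field_simps)

lemma uniform_divergence_scale: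
  fixes F :: "'n::finite hpt \<Rightarrow> 'a::metric_space"
  assumes diverge: "\<And>xs xs' ts. filterlim (\<lambda>k. exp (- ts k) * norm (xs k - xs' k)) at_top sequentially \<Longrightarrow>
      filterlim (\<lambda>k. dist (F (xs k, ts k)) (F (xs' k, ts k))) at_top sequentially"
  shows "\<exists>\<Lambda>. \<forall>x x' u. \<Lambda> \<le> exp (- u) * norm (x - x') \<longrightarrow> M \<le> dist (F (x, u)) (F (x', u))"
proof (rule ccontr)
  assume "\<not> ?thesis"
  then have "\<forall>k::nat. \<exists>x x' u. real k \<le> exp (- u) * norm (x - x') \<and> dist (F (x, u)) (F (x', u)) < M"
    by (auto simp: not_le)
  then obtain xs xs' ts where
    scale: "\<And>k. real k \<le> exp (- ts k) * norm (xs k - xs' k)" and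
    bounded: "\<And>k. dist (F (xs k, ts k)) (F (xs' k, ts k)) < M"
    by metis
  have "filterlim (\<lambda>k. exp (- ts k) * norm (xs k - xs' k)) at_top sequentially"
    by (rule filterlim_at_top_mono[OF filterlim_real_sequentially]) (use scale in auto)
  then have "eventually (\<lambda>k. M \<le> dist (F (xs k, ts k)) (F (xs' k, ts k))) sequentially"
    using diverge by (simp add: filterlim_at_top)
  then obtain N where "\<And>k. N \<le> k \<Longrightarrow> M \<le> dist (F (xs k, ts k)) (F (xs' k, ts k))"
    by (auto simp: eventually_sequentially)
  then show False
    using bounded[of N] by (simp add: not_le[symmetric])
qed

lemma uniform_divergence:
  fixes F :: "'n::finite hpt \<Rightarrow> 'a::metric_space"
  assumes diverge: "\<And>xs xs' ts. filterlim (\<lambda>k. exp (- ts k) * norm (xs k - xs' k)) at_top sequentially \<Longrightarrow>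
      filterlim (\<lambda>k. dist (F (xs k, ts k)) (F (xs' k, ts k))) at_top sequentially"
  shows "\<exists>\<Lambda>. \<forall>M. 0 \<le> \<Lambda> M \<and>
    (\<forall>x x' u. x \<noteq> x' \<longrightarrow> u \<le> ln (norm (x - x')) - \<Lambda> M \<longrightarrow> M \<le> dist (F (x, u)) (F (x', u)))"
proof -
  have "\<exists>L. 0 \<le> L \<and> (\<forall>x x' u. x \<noteq> x' \<longrightarrow> u \<le> ln (norm (x - x')) - L \<longrightarrow> M \<le> dist (F (x, u)) (F (x', u)))"
    for M
  proof -
    obtain \<Lambda> where \<Lambda>: "\<And>x x' u. \<Lambda> \<le> exp (- u) * norm (x - x') \<Longrightarrow> M \<le> dist (F (x, u)) (F (x', u))"
      using uniform_divergence_scale[of F M, OF diverge] by blast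
    have "M \<le> dist (F (x, u)) (F (x', u))"
      if "x \<noteq> x'" "u \<le> ln (norm (x - x')) - ln (max \<Lambda> 1)" for x x' u
    proof (rule \<Lambda>)
      have "ln (max \<Lambda> 1) \<le> ln (norm (x - x')) - u"
        using that(2) by linarith
      then have "exp (ln (max \<Lambda> 1)) \<le> exp (ln (norm (x - x')) - u)"
        by (simp only: exp_le_cancel_iff)
      then show "\<Lambda> \<le> exp (- u) * norm (x - x')"
        using that(1) by (simp add: exp_neg_mult_eq)
    qed
    then show ?thesis
      by (intro exI[of _ "ln (max \<Lambda> 1)"]) auto
  qed
  then have "\<forall>M. \<exists>L. 0 \<le> L \<and>
      (\<forall>x x' u. x \<noteq> x' \<longrightarrow> u \<le> ln (norm (x - x')) - L \<longrightarrow> M \<le> dist (F (x, u)) (F (x', u)))"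
    by blast
  then show ?thesis
    by (rule choice)
qed

lemma close_at_log_scale:
  fixes F :: "'n::finite hpt \<Rightarrow> 'a::metric_space"
  assumes close: "\<And>x x' t. exp (- t) * norm (x - x') < \<epsilon> \<Longrightarrow> dist (F (x, t)) (F (x', t)) \<le> R"
    and "0 < \<epsilon>" "x \<noteq> x'" "ln (norm (x - x')) + (\<bar>ln \<epsilon>\<bar> + 1) \<le> u"
  shows "dist (F (x, u)) (F (x', u)) \<le> R"
proof (rule close)
  have "ln (norm (x - x')) - u < ln \<epsilon>"
    using assms(4) abs_ge_minus_self[of "ln \<epsilon>"] by linarith
  then have "exp (ln (norm (x - x')) - u) < exp (ln \<epsilon>)"
    by (simp only: exp_less_cancel_iff)
  then show "exp (- u) * norm (x - x') < \<epsilon>"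
    using assms(2,3) by (simp add: exp_neg_mult_eq)
qed

section \<open>Two diverging geodesic lines\<close>

text \<open>Some parameter of a point of \<open>g\<close> within distance \<open>r\<close> of \<open>P\<close>; unspecified if there is none.\<close>
definition foot_param :: "(real \<Rightarrow> 'a::metric_space) \<Rightarrow> real \<Rightarrow> 'a \<Rightarrow> real" where
  "foot_param g r P = (SOME p. dist P (g p) < r)"

text \<open>\<open>\<gamma>\<close> and \<open>\<gamma>'\<close> model \<open>F\<close> along the vertical geodesics over \<open>x \<noteq> x'\<close>, \<open>g\<close> the third side of
  their slim triangle, and \<open>l\<close> the separation height \<open>ln |x - x'|\<close>.\<close>
locale diverging_lines =
  fixes \<gamma> \<gamma>' g :: "real \<Rightarrow> 'a::metric_space" and l \<delta> c R :: real and \<Lambda> :: "real \<Rightarrow> real"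
  assumes lines: "geodesic_line \<gamma>" "geodesic_line \<gamma>'" "geodesic_line g"
    and slim: "\<And>u. infdist (\<gamma> u) (range \<gamma>' \<union> range g) \<le> \<delta>"
      "\<And>u. infdist (\<gamma>' u) (range \<gamma> \<union> range g) \<le> \<delta>"
    and close_above: "\<And>u. l + c \<le> u \<Longrightarrow> dist (\<gamma> u) (\<gamma>' u) \<le> R"
    and far_below: "\<And>M u. u \<le> l - \<Lambda> M \<Longrightarrow> M \<le> dist (\<gamma> u) (\<gamma>' u)"
    and nonneg: "0 \<le> \<delta>" "0 \<le> c" "\<And>M. 0 \<le> \<Lambda> M"
begin

sublocale swap: diverging_lines \<gamma>' \<gamma> g l \<delta> c R \<Lambda>
  using lines slim close_above far_below nonneg by unfold_locales (simp_all add: dist_commute)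

lemma dist_along: "dist (\<gamma> s) (\<gamma> t) = \<bar>s - t\<bar>"
  using lines(1) by (simp add: geodesic_line_def)

lemma dist_along': "dist (\<gamma>' s) (\<gamma>' t) = \<bar>s - t\<bar>"
  using lines(2) by (simp add: geodesic_line_def)

lemma dist_along_third: "dist (g s) (g t) = \<bar>s - t\<bar>"
  using lines(3) by (simp add: geodesic_line_def)

lemma dist_le_above: "dist (\<gamma> t) (\<gamma>' t') \<le> 2 * max l (max t t') - t - t' + 2 * c + R"
proof -
  define s where "s = max l (max t t') + c"
  have "dist (\<gamma> t) (\<gamma>' t') \<le> dist (\<gamma> t) (\<gamma> s) + dist (\<gamma> s) (\<gamma>' s) + dist (\<gamma>' s) (\<gamma>' t')"
    by (rule dist_triangle3)
  also have "\<dots> \<le> (s - t) + R + (s - t')"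
    using close_above[of s] nonneg by (simp add: s_def dist_along dist_along')
  finally show ?thesis
    by (simp add: s_def)
qed

lemma dist_ge_above:
  assumes "l \<le> t" "t' \<le> t"
  shows "t - t' - (2 * c + R) \<le> dist (\<gamma> t) (\<gamma>' t')"
proof -
  have "dist (\<gamma>' t) (\<gamma>' t') \<le> dist (\<gamma>' t) (\<gamma> t) + dist (\<gamma> t) (\<gamma>' t')"
    by (rule dist_triangle)
  moreover have "dist (\<gamma> t) (\<gamma>' t) \<le> 2 * c + R"
    using dist_le_above[of t t] assms by simp
  ultimately show ?thesis
    using assms by (simp add: dist_along' dist_commute)
qed

text \<open>Below \<open>deep\<close> the lines are more than \<open>2 (\<delta> + 1) + R\<close> apart, so each point of \<open>\<gamma>\<close> is
  \<open>\<delta>\<close>-close to \<open>g\<close> rather than to \<open>\<gamma>'\<close>.\<close>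
definition deep :: real where
  "deep = l - \<Lambda> (2 * \<delta> + R + 3)"

lemma far_from_other_line:
  assumes "u \<le> deep"
  shows "\<delta> + 1 \<le> dist (\<gamma> u) (\<gamma>' v)"
proof (rule ccontr)
  assume "\<not> ?thesis"
  then have near: "dist (\<gamma> u) (\<gamma>' v) < \<delta> + 1"
    by simp
  define w where "w = max (max u v) (l + c)"
  have "dist (\<gamma> w) (\<gamma>' w) \<le> R"
    using close_above by (simp add: w_def)
  moreover have "dist (\<gamma> u) (\<gamma> w) = w - u" "dist (\<gamma>' v) (\<gamma>' w) = w - v"
    by (simp_all add: dist_along dist_along' w_def)
  moreover have "dist (\<gamma> u) (\<gamma> w) \<le> dist (\<gamma> u) (\<gamma>' v) + dist (\<gamma>' v) (\<gamma>' w) + dist (\<gamma>' w) (\<gamma> w)"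
    "dist (\<gamma>' v) (\<gamma>' w) \<le> dist (\<gamma>' v) (\<gamma> u) + dist (\<gamma> u) (\<gamma> w) + dist (\<gamma> w) (\<gamma>' w)"
    by (rule dist_triangle3)+
  ultimately have "\<bar>u - v\<bar> \<le> dist (\<gamma> u) (\<gamma>' v) + R"
    using dist_commute[of "\<gamma> w" "\<gamma>' w"] dist_commute[of "\<gamma> u" "\<gamma>' v"] unfolding abs_le_iff by linarith
  moreover have "dist (\<gamma> u) (\<gamma>' u) \<le> dist (\<gamma> u) (\<gamma>' v) + \<bar>u - v\<bar>"
    using dist_triangle[of "\<gamma> u" "\<gamma>' u" "\<gamma>' v"] by (simp add: dist_along' abs_minus_commute)
  moreover have "2 * \<delta> + R + 3 \<le> dist (\<gamma> u) (\<gamma>' u)"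
    using far_below assms by (simp add: deep_def)
  ultimately show False
    using near by linarith
qed

abbreviation foot :: "real \<Rightarrow> real" where
  "foot u \<equiv> foot_param g (\<delta> + 1) (\<gamma> u)"

abbreviation foot' :: "real \<Rightarrow> real" where
  "foot' u \<equiv> foot_param g (\<delta> + 1) (\<gamma>' u)"

lemma dist_foot:
  assumes "u \<le> deep"
  shows "dist (\<gamma> u) (g (foot u)) < \<delta> + 1"
proof -
  obtain y where y: "y \<in> range \<gamma>' \<union> range g" "dist (\<gamma> u) y < \<delta> + 1"
    using infdist_lessE[of "range \<gamma>' \<union> range g" "\<gamma> u" "\<delta> + 1"] slim(1)[of u] by force
  have "y \<notin> range \<gamma>'"
    using far_from_other_line[OF assms] y(2) by (auto simp: not_le[symmetric])
  then have "\<exists>p. dist (\<gamma> u) (g p) < \<delta> + 1"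
    using y by auto
  then show ?thesis
    unfolding foot_param_def by (rule someI_ex)
qed

lemma foot_quasi_isometric:
  assumes "u \<le> deep" "v \<le> deep"
  shows "\<bar>\<bar>foot u - foot v\<bar> - \<bar>u - v\<bar>\<bar> \<le> 2 * (\<delta> + 1)"
  using abs_dist_diff_le_sum[of "\<gamma> u" "\<gamma> v" "g (foot u)" "g (foot v)"]
    dist_foot[OF assms(1)] dist_foot[OF assms(2)]
  by (simp add: dist_along dist_along_third)

lemma foot_affine:
  obtains s where "s = 1 \<or> s = -1" "\<And>u. u \<le> deep \<Longrightarrow> \<bar>foot u - foot deep - s * (deep - u)\<bar> \<le> 8 * (\<delta> + 1)"
  by (rule quasi_isometry_halfline_affine[of "2 * (\<delta> + 1)" deep foot])
    (use nonneg foot_quasi_isometric that in auto)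

end

text \<open>The locale is reopened so that the lemmas above are available for the \<open>swap\<close> instance.\<close>
context diverging_lines
begin

lemma dist_across_feet:
  assumes "u \<le> deep" "v \<le> deep"
  shows "\<bar>dist (\<gamma> u) (\<gamma>' v) - \<bar>foot u - foot' v\<bar>\<bar> \<le> 2 * (\<delta> + 1)"
  using abs_dist_diff_le_sum[of "\<gamma> u" "\<gamma>' v" "g (foot u)" "g (foot' v)"]
    dist_foot[OF assms(1)] swap.dist_foot[OF assms(2)]
  by (simp add: dist_along_third)

lemma feet_close_at_deep:
  "\<bar>foot deep - foot' deep\<bar> \<le> 2 * (\<delta> + 1) + 2 * \<Lambda> (2 * \<delta> + R + 3) + 2 * c + R"
proof -
  have "dist (\<gamma> deep) (\<gamma>' deep) \<le> 2 * \<Lambda> (2 * \<delta> + R + 3) + 2 * c + R"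
    using dist_le_above[of deep deep] nonneg(3) by (simp add: deep_def)
  then show ?thesis
    using dist_across_feet[of deep deep] by simp
qed

text \<open>The two chains of feet run off in opposite directions along \<open>g\<close>: otherwise they would stay
  boundedly close, and so would \<open>\<gamma>\<close> and \<open>\<gamma>'\<close>, far below the level \<open>l\<close>.\<close>
lemma feet_opposite:
  obtains s where "s = 1 \<or> s = -1"
    "\<And>u. u \<le> deep \<Longrightarrow> \<bar>foot u - foot deep - s * (deep - u)\<bar> \<le> 8 * (\<delta> + 1)"
    "\<And>u. u \<le> deep \<Longrightarrow> \<bar>foot' u - foot' deep + s * (deep - u)\<bar> \<le> 8 * (\<delta> + 1)"
proof -
  obtain s where s: "s = 1 \<or> s = -1"
    "\<And>u. u \<le> deep \<Longrightarrow> \<bar>foot u - foot deep - s * (deep - u)\<bar> \<le> 8 * (\<delta> + 1)"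
    using foot_affine by blast
  obtain s' where s': "s' = 1 \<or> s' = -1"
    "\<And>u. u \<le> deep \<Longrightarrow> \<bar>foot' u - foot' deep - s' * (deep - u)\<bar> \<le> 8 * (\<delta> + 1)"
    using swap.foot_affine by blast
  have "s' = - s"
  proof (rule ccontr)
    assume "s' \<noteq> - s"
    then have same: "s' = s"
      using s(1) s'(1) by auto
    define M where "M = 20 * (\<delta> + 1) + 2 * \<Lambda> (2 * \<delta> + R + 3) + 2 * c + R + 1"
    define u where "u = min deep (l - \<Lambda> M)"
    have "u \<le> deep"
      by (simp add: u_def)
    then have "\<bar>foot u - foot' u\<bar> \<le> 16 * (\<delta> + 1) + (2 * (\<delta> + 1) + 2 * \<Lambda> (2 * \<delta> + R + 3) + 2 * c + R)"
      using s(2)[of u] s'(2)[of u] feet_close_at_deep unfolding same abs_le_iff by linarith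
    moreover have "\<bar>dist (\<gamma> u) (\<gamma>' u) - \<bar>foot u - foot' u\<bar>\<bar> \<le> 2 * (\<delta> + 1)"
      using dist_across_feet \<open>u \<le> deep\<close> by simp
    moreover have "M \<le> dist (\<gamma> u) (\<gamma>' u)"
      using far_below by (simp add: u_def)
    ultimately show False
      unfolding M_def abs_le_iff by linarith
  qed
  show thesis
    by (rule that[OF s]) (use s'(2) \<open>s' = - s\<close> in auto)
qed

lemma dist_ge_deep:
  assumes "t \<le> deep" "t' \<le> deep"
  shows "2 * deep - t - t' - (20 * (\<delta> + 1) + 2 * \<Lambda> (2 * \<delta> + R + 3) + 2 * c + R) \<le> dist (\<gamma> t) (\<gamma>' t')"
proof -
  obtain s where s: "s = 1 \<or> s = -1"
    "\<And>u. u \<le> deep \<Longrightarrow> \<bar>foot u - foot deep - s * (deep - u)\<bar> \<le> 8 * (\<delta> + 1)"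
    "\<And>u. u \<le> deep \<Longrightarrow> \<bar>foot' u - foot' deep + s * (deep - u)\<bar> \<le> 8 * (\<delta> + 1)"
    using feet_opposite by blast
  have "2 * deep - t - t' - (18 * (\<delta> + 1) + 2 * \<Lambda> (2 * \<delta> + R + 3) + 2 * c + R) \<le> \<bar>foot t - foot' t'\<bar>"
    using s(1) s(2)[OF assms(1)] s(3)[OF assms(2)] feet_close_at_deep
    by (elim disjE) (simp_all add: abs_le_iff, linarith+)
  then show ?thesis
    using dist_across_feet[OF assms] unfolding abs_le_iff by linarith
qed

lemma dist_ge_below:
  assumes "t \<le> l" "t' \<le> l"
  shows "2 * l - t - t' - (20 * (\<delta> + 1) + 4 * \<Lambda> (2 * \<delta> + R + 3) + 2 * c + R) \<le> dist (\<gamma> t) (\<gamma>' t')"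
proof -
  define u u' where "u = min t deep" and "u' = min t' deep"
  have "dist (\<gamma> u) (\<gamma>' u') \<le> dist (\<gamma> u) (\<gamma> t) + dist (\<gamma> t) (\<gamma>' t') + dist (\<gamma>' t') (\<gamma>' u')"
    by (rule dist_triangle3)
  moreover have "dist (\<gamma> u) (\<gamma> t) = t - u" "dist (\<gamma>' t') (\<gamma>' u') = t' - u'"
    by (simp_all add: dist_along dist_along' u_def u'_def)
  moreover have "2 * deep - u - u' - (20 * (\<delta> + 1) + 2 * \<Lambda> (2 * \<delta> + R + 3) + 2 * c + R) \<le> dist (\<gamma> u) (\<gamma>' u')"
    by (rule dist_ge_deep) (simp_all add: u_def u'_def)
  ultimately show ?thesis
    by (simp add: deep_def)
qed

lemma dist_approx:
  "\<bar>dist (\<gamma> t) (\<gamma>' t') - (2 * max l (max t t') - t - t')\<bar> \<le> 20 * (\<delta> + 1) + 4 * \<Lambda> (2 * \<delta> + R + 3) + 2 * c + R"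
proof -
  have K: "2 * c + R \<le> 20 * (\<delta> + 1) + 4 * \<Lambda> (2 * \<delta> + R + 3) + 2 * c + R"
    using nonneg by simp
  consider "l \<le> t" "t' \<le> t" | "l \<le> t'" "t \<le> t'" | "t \<le> l" "t' \<le> l"
    by linarith
  then have "2 * max l (max t t') - t - t' - (20 * (\<delta> + 1) + 4 * \<Lambda> (2 * \<delta> + R + 3) + 2 * c + R)
      \<le> dist (\<gamma> t) (\<gamma>' t')"
  proof cases
    case 1
    then show ?thesis
      using dist_ge_above[OF 1] K by (simp add: max_def)
  next
    case 2
    then show ?thesis
      using swap.dist_ge_above[OF 2] K by (simp add: max_def dist_commute)
  next
    case 3
    then show ?thesis
      using dist_ge_below[OF 3] by (simp add: max_def)
  qed
  then show ?thesis
    using dist_le_above[of t t'] K unfolding abs_le_iff by linarith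
qed

end

theorem lemma2p2:
  fixes F :: "'n::finite hpt \<Rightarrow> 'a::metric_space"
    and \<delta> \<epsilon> R :: real
  assumes geod: "geodesic_space (UNIV :: 'a set)"
    and pos: "\<delta> > 0" "\<epsilon> > 0" "R > 0"
    and h1: "\<And>x. geodesic_line (F \<circ> vgeod x)"
    and h2: "\<And>x x'. x \<noteq> x' \<Longrightarrow> ideal_slim_sides \<delta> (F \<circ> vgeod x) (F \<circ> vgeod x')"
    and h3: "\<And>x x' t. exp (- t) * norm (x - x') < \<epsilon> \<Longrightarrow> dist (F (x, t)) (F (x', t)) \<le> R"
    and h4: "\<And>xs xs' ts. filterlim (\<lambda>k. exp (- ts k) * norm (xs k - xs' k)) at_top sequentially \<Longrightarrow>
               filterlim (\<lambda>k. dist (F (xs k, ts k)) (F (xs' k, ts k))) at_top sequentially"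
  shows "\<exists>K\<ge>0. \<forall>p q. \<bar>hdist p q - dist (F p) (F q)\<bar> \<le> K"
proof -
  define c where "c = \<bar>ln \<epsilon>\<bar> + 1"
  have vertical: "F \<circ> vgeod x = (\<lambda>s. F (x, s))" for x
    by (simp add: fun_eq_iff vgeod_def)
  obtain \<Lambda> where \<Lambda>: "\<forall>M. 0 \<le> \<Lambda> M \<and>
      (\<forall>x x' u. x \<noteq> x' \<longrightarrow> u \<le> ln (norm (x - x')) - \<Lambda> M \<longrightarrow> M \<le> dist (F (x, u)) (F (x', u)))"
    using uniform_divergence[of F, OF h4] by blast
  define K where "K = 20 * (\<delta> + 1) + 4 * \<Lambda> (2 * \<delta> + R + 3) + 2 * c + R"
  have "0 \<le> K"
    using pos \<Lambda> by (simp add: K_def c_def)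
  have "\<bar>hdist (x, t) (x', t') - dist (F (x, t)) (F (x', t'))\<bar> \<le> K + ln 3" for x x' t t'
  proof (cases "x = x'")
    case True
    then show ?thesis
      using hdist_same_vertical[of x t t'] h1[of x] \<open>0 \<le> K\<close> by (simp add: vertical geodesic_line_def)
  next
    case False
    obtain g where "geodesic_line g"
      "\<And>u. infdist (F (x, u)) (range (\<lambda>s. F (x', s)) \<union> range g) \<le> \<delta>"
      "\<And>u. infdist (F (x', u)) (range (\<lambda>s. F (x, s)) \<union> range g) \<le> \<delta>"
      by (rule ideal_slim_sidesE[OF h2[OF False], unfolded vertical]) blast
    then interpret diverging_lines "\<lambda>s. F (x, s)" "\<lambda>s. F (x', s)" g "ln (norm (x - x'))" \<delta> c R \<Lambda>
      using h1 close_at_log_scale[where F = F, OF h3 pos(2) False] \<Lambda> False pos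
      by unfold_locales (simp_all add: vertical c_def)
    show ?thesis
      using dist_approx[of t t'] hdist_distinct_vertical[OF False, of t t']
      unfolding K_def abs_le_iff by linarith
  qed
  moreover have "0 \<le> K + ln 3"
    using \<open>0 \<le> K\<close> by simp
  ultimately show ?thesis
    by (intro exI[of _ "K + ln 3"]) auto
qed

end
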